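(* Let $(X,p)$ be a complete partial metric space, let $x_o,y_o\in X$, and let $f,g:X\to X$ be functions such that $\{f^i(x_o)\}_{i\in\mathbb{N}}$ and $\{g^i(y_o)\}_{i\in\mathbb{N}}$ form a Cauchy pair. If $f$ and $g$ are non-expansive, $f$ is weakly orbitally continuous at $x_o$ and $g$ is weakly orbitally continuous at $y_o$, then $f$ and $g$ have a common fixed point.
   Context: A partial metric on $X$ is $p:X\times X\to\mathbb{R}$ with, for all $x,y,z$: $p(x,x)\le p(x,y)$; $p(x,y)=p(y,x)$; $p(x,x)=p(x,y)=p(y,y)$ iff $x=y$; $p(x,y)\le p(x,z)+p(z,y)-p(z,z)$. A point $a$ is a limit of $\{x_i\}$ iff for every $\epsilon>0$ there is $N$ with $p(a,x_i)-p(a,a)<\epsilon$ for all $i>N$ (convergence in the topology generated by the balls $\{y\mid p(x,y)-p(x,x)<\epsilon\}$). $\{x_i\}$ is Cauchy with central distance $r$ if for every $\epsilon>0$ there is $N$ with $|p(x_i,x_j)-r|<\epsilon$ for all $i\ge j>N$; a special limit is a limit $a$ with $p(a,a)=r$; $(X,p)$ is complete if every Cauchy sequence has a special limit. Sequences $\{x_i\},\{y_i\}$ form a Cauchy pair if there is $r\in\mathbb{R}$ such that for every $\epsilon>0$ there is $N$ with $r-\epsilon<\min\{p(x_i,x_i),p(y_j,y_j)\}\le p(x_i,y_j)<r+\epsilon$ for all $i,j>N$. $f^0(x)=x$, $f^{i+1}(x)=f(f^i(x))$. $f$ is non-expansive if $p(f(x),f(y))\le p(x,y)$ for all $x,y$;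 $f$ is weakly orbitally continuous at $x_o$ if whenever $a$ is a special limit of $\{f^i(x_o)\}$, $f(a)$ is a limit of $\{f^i(x_o)\}$. *)

theory Defs
  imports Main "HOL.Real"
begin

definition partial_metric :: "('a \<Rightarrow> 'a \<Rightarrow> real) \<Rightarrow> bool" where
  "partial_metric p \<longleftrightarrow>
     (\<forall>x y z.
        p x x \<le> p x y \<and>
        p x y = p y x \<and>
        ((p x x = p x y \<and> p x y = p y y) \<longleftrightarrow> x = y) \<and>
        p x y \<le> p x z + p z y - p z z)"

definition pm_limit :: "('a \<Rightarrow> 'a \<Rightarrow> real) \<Rightarrow> (nat \<Rightarrow> 'a) \<Rightarrow> 'a \<Rightarrow> bool" where
  "pm_limit p x a \<longleftrightarrow> (\<forall>\<epsilon>>0. \<exists>N. \<forall>i>N. p a (x i) - p a a < \<epsilon>)"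

definition pm_cauchy :: "('a \<Rightarrow> 'a \<Rightarrow> real) \<Rightarrow> (nat \<Rightarrow> 'a) \<Rightarrow> real \<Rightarrow> bool" where
  "pm_cauchy p x r \<longleftrightarrow> (\<forall>\<epsilon>>0. \<exists>N. \<forall>i j. i \<ge> j \<and> j > N \<longrightarrow> \<bar>p (x i) (x j) - r\<bar> < \<epsilon>)"

definition pm_special_limit :: "('a \<Rightarrow> 'a \<Rightarrow> real) \<Rightarrow> (nat \<Rightarrow> 'a) \<Rightarrow> real \<Rightarrow> 'a \<Rightarrow> bool" where
  "pm_special_limit p x r a \<longleftrightarrow> pm_limit p x a \<and> p a a = r"

definition pm_complete :: "('a \<Rightarrow> 'a \<Rightarrow> real) \<Rightarrow> bool" where
  "pm_complete p \<longleftrightarrow> (\<forall>x r. pm_cauchy p x r \<longrightarrow> (\<exists>a. pm_special_limit p x r a))"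

definition pm_cauchy_pair :: "('a \<Rightarrow> 'a \<Rightarrow> real) \<Rightarrow> (nat \<Rightarrow> 'a) \<Rightarrow> (nat \<Rightarrow> 'a) \<Rightarrow> bool" where
  "pm_cauchy_pair p x y \<longleftrightarrow> (\<exists>r. \<forall>\<epsilon>>0. \<exists>N. \<forall>i j. i > N \<and> j > N \<longrightarrow>
      r - \<epsilon> < min (p (x i) (x i)) (p (y j) (y j)) \<and>
      min (p (x i) (x i)) (p (y j) (y j)) \<le> p (x i) (y j) \<and>
      p (x i) (y j) < r + \<epsilon>)"

definition non_expansive :: "('a \<Rightarrow> 'a \<Rightarrow> real) \<Rightarrow> ('a \<Rightarrow> 'a) \<Rightarrow> bool" where
  "non_expansive p f \<longleftrightarrow> (\<forall>x y. p (f x) (f y) \<le> p x y)"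

text \<open>A special limit of a sequence is a limit a with p a a equal to the
  central distance of the sequence; for a non-Cauchy sequence the notion is
  read as: limit a such that the sequence is Cauchy with central distance p a a.\<close>
definition weakly_orbitally_continuous :: "('a \<Rightarrow> 'a \<Rightarrow> real) \<Rightarrow> ('a \<Rightarrow> 'a) \<Rightarrow> 'a \<Rightarrow> bool" where
  "weakly_orbitally_continuous p f x0 \<longleftrightarrow>
     (\<forall>a. (pm_cauchy p (\<lambda>i. (f ^^ i) x0) (p a a) \<and> pm_special_limit p (\<lambda>i. (f ^^ i) x0) (p a a) a)
          \<longrightarrow> pm_limit p (\<lambda>i. (f ^^ i) x0) (f a))"

end

theory Submission
  imports Defs
begin

text \<open>The two orbits of a Cauchy pair are Cauchy with the same central distance r, so
  completeness gives a special limit a of the f-orbit x, and a is then a special limit of the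
  g-orbit as well. Weak orbital continuity makes f a a limit of x, whence r \<le> p (f a) (f a);
  the triangle inequality through x (i+1), together with p (x (i+1)) (f a) \<le> p (x i) a by
  non-expansiveness, gives p a (f a) \<le> r. So p a a = p a (f a) = p (f a) (f a) and f a = a;
  likewise g a = a.\<close>

lemma pm_sym: "partial_metric p \<Longrightarrow> p x y = p y x"
  unfolding partial_metric_def by blast

lemma pm_self_le_left: "partial_metric p \<Longrightarrow> p x x \<le> p x y"
  unfolding partial_metric_def by blast

lemma pm_self_le_right: "partial_metric p \<Longrightarrow> p y y \<le> p x y"
  using pm_self_le_left[of p y x] pm_sym[of p x y] by simp

lemma pm_triangle: "partial_metric p \<Longrightarrow> p x y \<le> p x z + p z y - p z z"
  unfolding partial_metric_def by blast

lemma pm_eqI: "partial_metric p \<Longrightarrow> p x x = p x y \<Longrightarrow> p x y = p y y \<Longrightarrow> x = y"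
  unfolding partial_metric_def by blast

lemma pm_limit_eventually:
  assumes "pm_limit p x a" and "e > 0"
  shows "eventually (\<lambda>i. p a (x i) < p a a + e) sequentially"
proof -
  obtain N where "\<forall>i>N. p a (x i) - p a a < e"
    using assms unfolding pm_limit_def by blast
  then have "\<forall>i\<ge>Suc N. p a (x i) < p a a + e"
    by (auto simp: Suc_le_eq)
  then show ?thesis
    unfolding eventually_sequentially by blast
qed

lemma pm_cauchy_diag_eventually:
  assumes "pm_cauchy p x r" and "e > 0"
  shows "eventually (\<lambda>i. r - e < p (x i) (x i)) sequentially"
proof -
  obtain N where "\<forall>i j. i \<ge> j \<and> j > N \<longrightarrow> \<bar>p (x i) (x j) - r\<bar> < e"
    using assms unfolding pm_cauchy_def by blast
  then have "\<forall>i\<ge>Suc N. r - e < p (x i) (x i)"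
    by (force simp: Suc_le_eq abs_less_iff)
  then show ?thesis
    unfolding eventually_sequentially by blast
qed

definition pm_cauchy_pair_at :: "('a \<Rightarrow> 'a \<Rightarrow> real) \<Rightarrow> (nat \<Rightarrow> 'a) \<Rightarrow> (nat \<Rightarrow> 'a) \<Rightarrow> real \<Rightarrow> bool"
  where "pm_cauchy_pair_at p x y r \<longleftrightarrow> (\<forall>\<epsilon>>0. \<exists>N. \<forall>i j. i > N \<and> j > N \<longrightarrow>
      r - \<epsilon> < min (p (x i) (x i)) (p (y j) (y j)) \<and>
      min (p (x i) (x i)) (p (y j) (y j)) \<le> p (x i) (y j) \<and>
      p (x i) (y j) < r + \<epsilon>)"

lemma pm_cauchy_pair_iff: "pm_cauchy_pair p x y \<longleftrightarrow> (\<exists>r. pm_cauchy_pair_at p x y r)"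
  unfolding pm_cauchy_pair_def pm_cauchy_pair_at_def ..

lemma pm_cauchy_pair_atD:
  assumes "pm_cauchy_pair_at p x y r" and "e > 0"
  obtains N where "\<And>i j. i > N \<Longrightarrow> j > N \<Longrightarrow>
    r - e < p (x i) (x i) \<and> r - e < p (y j) (y j) \<and> p (x i) (y j) < r + e"
  using assms unfolding pm_cauchy_pair_at_def by (metis min_less_iff_conj)

lemma pm_cauchy_pair_at_commute:
  assumes pm: "partial_metric p" and "pm_cauchy_pair_at p x y r"
  shows "pm_cauchy_pair_at p y x r"
  unfolding pm_cauchy_pair_at_def
proof (intro allI impI)
  fix e :: real
  assume "e > 0"
  then obtain N where N: "\<forall>i j. i > N \<and> j > N \<longrightarrow>
      r - e < min (p (x i) (x i)) (p (y j) (y j)) \<and>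
      min (p (x i) (x i)) (p (y j) (y j)) \<le> p (x i) (y j) \<and>
      p (x i) (y j) < r + e"
    using assms(2) unfolding pm_cauchy_pair_at_def by blast
  have "r - e < min (p (y i) (y i)) (p (x j) (x j)) \<and>
      min (p (y i) (y i)) (p (x j) (x j)) \<le> p (y i) (x j) \<and> p (y i) (x j) < r + e"
    if "i > N" "j > N" for i j
    using N that pm_sym[OF pm, of "y i" "x j"] by (simp add: min.commute)
  then show "\<exists>N. \<forall>i j. i > N \<and> j > N \<longrightarrow>
      r - e < min (p (y i) (y i)) (p (x j) (x j)) \<and>
      min (p (y i) (y i)) (p (x j) (x j)) \<le> p (y i) (x j) \<and> p (y i) (x j) < r + e"
    by blast
qed

lemma pm_cauchy_pair_at_cauchy:
  assumes pm: "partial_metric p" and xy: "pm_cauchy_pair_at p x y r"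
  shows "pm_cauchy p x r"
  unfolding pm_cauchy_def
proof (intro allI impI)
  fix e :: real
  assume "e > 0"
  then obtain N where N: "\<And>i j. i > N \<Longrightarrow> j > N \<Longrightarrow>
      r - e/3 < p (x i) (x i) \<and> r - e/3 < p (y j) (y j) \<and> p (x i) (y j) < r + e/3"
    using pm_cauchy_pair_atD[OF xy, of "e/3"] by auto
  have "\<bar>p (x i) (x j) - r\<bar> < e" if "j > N" "i \<ge> j" for i j
  proof -
    let ?z = "y (Suc N)"
    have "p (x i) (x j) \<le> p (x i) ?z + p (x j) ?z - p ?z ?z"
      using pm_triangle[OF pm, of "x i" "x j" ?z] pm_sym[OF pm, of ?z "x j"] by simp
    moreover have "p (x j) (x j) \<le> p (x i) (x j)"
      by (rule pm_self_le_right[OF pm])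
    ultimately show ?thesis
      using N[of i "Suc N"] N[of j "Suc N"] that by (simp add: abs_less_iff)
  qed
  then show "\<exists>N. \<forall>i j. i \<ge> j \<and> j > N \<longrightarrow> \<bar>p (x i) (x j) - r\<bar> < e"
    by blast
qed

lemma pm_cauchy_pair_at_limit:
  assumes pm: "partial_metric p" and xy: "pm_cauchy_pair_at p x y r"
    and a: "pm_special_limit p x r a"
  shows "pm_limit p y a"
  unfolding pm_limit_def
proof (intro allI impI)
  fix e :: real
  assume e: "e > 0"
  obtain N where N: "\<And>i j. i > N \<Longrightarrow> j > N \<Longrightarrow>
      r - e/3 < p (x i) (x i) \<and> r - e/3 < p (y j) (y j) \<and> p (x i) (y j) < r + e/3"
    using pm_cauchy_pair_atD[OF xy, of "e/3"] e by auto
  have "eventually (\<lambda>i. i > N \<and> p a (x i) < p a a + e/3) sequentially"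
    using a e unfolding pm_special_limit_def
    by (intro eventually_conj eventually_gt_at_top pm_limit_eventually) auto
  then obtain i where "i > N" and i: "p a (x i) < p a a + e/3"
    using eventually_happens' sequentially_bot by blast
  have "p a (y j) - p a a < e" if "j > N" for j
    using pm_triangle[OF pm, of a "y j" "x i"] N[OF \<open>i > N\<close> that] i a
    unfolding pm_special_limit_def by linarith
  then show "\<exists>N. \<forall>j>N. p a (y j) - p a a < e"
    by blast
qed

lemma pm_cauchy_limit_self_ge:
  assumes pm: "partial_metric p" and "pm_cauchy p x r" and "pm_limit p x b"
  shows "r \<le> p b b"
proof (rule field_le_epsilon)
  fix e :: real
  assume "e > 0"
  then have "eventually (\<lambda>i. r - e/2 < p (x i) (x i) \<and> p b (x i) < p b b + e/2) sequentially"
    using assms by (intro eventually_conj pm_cauchy_diag_eventually pm_limit_eventually) auto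
  then obtain i where "r - e/2 < p (x i) (x i)" "p b (x i) < p b b + e/2"
    using eventually_happens' sequentially_bot by blast
  then show "r \<le> p b b + e"
    using pm_self_le_right[OF pm, where x=b and y="x i"] by linarith
qed

lemma non_expansive_orbit_limit_dist_le:
  assumes pm: "partial_metric p" and f: "non_expansive p f"
    and c: "pm_cauchy p (\<lambda>i. (f ^^ i) x0) r" and a: "pm_special_limit p (\<lambda>i. (f ^^ i) x0) r a"
  shows "p a (f a) \<le> r"
proof (rule field_le_epsilon)
  fix e :: real
  assume "e > 0"
  let ?x = "\<lambda>i. (f ^^ i) x0"
  have lim: "eventually (\<lambda>i. p a (?x i) < r + e / 3) sequentially"
    using a \<open>e > 0\<close> pm_limit_eventually unfolding pm_special_limit_def by fastforce
  have diag: "eventually (\<lambda>i. r - e / 3 < p (?x i) (?x i)) sequentially"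
    using pm_cauchy_diag_eventually[OF c] \<open>e > 0\<close> by simp
  have "eventually (\<lambda>i. p a (?x i) < r + e / 3 \<and> p a (?x (Suc i)) < r + e / 3
      \<and> r - e / 3 < p (?x (Suc i)) (?x (Suc i))) sequentially"
    using lim eventually_sequentially_Suc[of "\<lambda>i. p a (?x i) < r + e / 3", THEN iffD2, OF lim]
      eventually_sequentially_Suc[of "\<lambda>i. r - e / 3 < p (?x i) (?x i)", THEN iffD2, OF diag]
    by (intro eventually_conj)
  then obtain i where i: "p a (?x i) < r + e / 3" "p a (?x (Suc i)) < r + e / 3"
      "r - e / 3 < p (?x (Suc i)) (?x (Suc i))"
    using eventually_happens' sequentially_bot by blast
  have "p (?x (Suc i)) (f a) \<le> p a (?x i)"
    using f pm_sym[OF pm] unfolding non_expansive_def by (metis funpow.simps(2) o_apply)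
  then show "p a (f a) \<le> r + e"
    using pm_triangle[OF pm, of a "f a" "?x (Suc i)"] i by linarith
qed

lemma weakly_orbitally_continuous_fixed_point:
  assumes pm: "partial_metric p" and f: "non_expansive p f"
    and woc: "weakly_orbitally_continuous p f x0"
    and c: "pm_cauchy p (\<lambda>i. (f ^^ i) x0) r" and a: "pm_special_limit p (\<lambda>i. (f ^^ i) x0) r a"
  shows "f a = a"
proof -
  have r: "p a a = r"
    using a unfolding pm_special_limit_def ..
  have "pm_limit p (\<lambda>i. (f ^^ i) x0) (f a)"
    using woc c a r unfolding weakly_orbitally_continuous_def by blast
  then have "r \<le> p (f a) (f a)"
    by (rule pm_cauchy_limit_self_ge[OF pm c])
  moreover have "p a (f a) \<le> r"
    by (rule non_expansive_orbit_limit_dist_le[OF pm f c a])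
  moreover have "p (f a) (f a) \<le> p a (f a)" "p a a \<le> p a (f a)"
    using pm_self_le_right[OF pm, where x=a and y="f a"] pm_self_le_left[OF pm] by simp_all
  ultimately have "p a a = p a (f a)" and "p a (f a) = p (f a) (f a)"
    using r by linarith+
  then show ?thesis
    using pm_eqI[OF pm] by metis
qed

theorem theorem7p9:
  fixes p :: "'a \<Rightarrow> 'a \<Rightarrow> real" and f g :: "'a \<Rightarrow> 'a" and x0 y0 :: 'a
  assumes "partial_metric p" and "pm_complete p"
    and "pm_cauchy_pair p (\<lambda>i. (f ^^ i) x0) (\<lambda>i. (g ^^ i) y0)"
    and "non_expansive p f" and "non_expansive p g"
    and "weakly_orbitally_continuous p f x0"
    and "weakly_orbitally_continuous p g y0"
  shows "\<exists>z. f z = z \<and> g z = z"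
proof -
  obtain r where xy: "pm_cauchy_pair_at p (\<lambda>i. (f ^^ i) x0) (\<lambda>i. (g ^^ i) y0) r"
    using assms(3) pm_cauchy_pair_iff by blast
  have yx: "pm_cauchy_pair_at p (\<lambda>i. (g ^^ i) y0) (\<lambda>i. (f ^^ i) x0) r"
    using pm_cauchy_pair_at_commute[OF assms(1) xy] .
  have cx: "pm_cauchy p (\<lambda>i. (f ^^ i) x0) r" and cy: "pm_cauchy p (\<lambda>i. (g ^^ i) y0) r"
    using pm_cauchy_pair_at_cauchy[OF assms(1)] xy yx by blast+
  obtain a where ax: "pm_special_limit p (\<lambda>i. (f ^^ i) x0) r a"
    using assms(2) cx unfolding pm_complete_def by blast
  then have ay: "pm_special_limit p (\<lambda>i. (g ^^ i) y0) r a"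
    using pm_cauchy_pair_at_limit[OF assms(1) xy] unfolding pm_special_limit_def by blast
  have "f a = a"
    using weakly_orbitally_continuous_fixed_point[OF assms(1,4,6) cx ax] .
  moreover have "g a = a"
    using weakly_orbitally_continuous_fixed_point[OF assms(1,5,7) cy ay] .
  ultimately show ?thesis
    by blast
qed

end
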